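(* Let $(\mathfrak{g},\mathfrak{h},J,-B)$ be a compact semisimple irreducible Hermitian symmetric pair and let $s\in\{0,1\}$ with $\dim\mathfrak{h}\equiv s\pmod 2$. Let $\mathfrak{n}(\mathfrak{g},\mathfrak{h})=\mathfrak{h}\oplus\mathfrak{m}$ with bracket $[z+x,z'+x']_{\mathfrak{n}}=[x,x']$ ($z,z'\in\mathfrak{h}$, $x,x'\in\mathfrak{m}$, $[\cdot,\cdot]$ the bracket of $\mathfrak{g}$), and endow $\mathbb{R}^s\oplus\mathfrak{n}(\mathfrak{g},\mathfrak{h})$ (with $\mathbb{R}^s$ central) with the inner product $\langle\cdot,\cdot\rangle$ equal to $-B$ on $\mathfrak{g}$ and making $\mathbb{R}^s$ a unit-length factor orthogonal to $\mathfrak{g}$. Then $\mathbb{R}^s\oplus\mathfrak{n}(\mathfrak{g},\mathfrak{h})$ admits an abelian complex structure with respect to which $\langle\cdot,\cdot\rangle$ is Hermitian and pluriclosed; explicitly, any $\mathbb{J}$ with $\mathbb{J}|_{\mathfrak{m}}=J$ and $\mathbb{J}|_{\mathbb{R}^s\oplus\mathfrak{h}}$ an orthogonal map squaring to $-I$ works. Moreover, the corresponding left-invariant metric on $\mathbb{R}^s\times N(\mathfrak{g},\mathfrak{h})$, where $N(\mathfrak{g},\mathfrak{h})$ is the simply connected Lie group with Lie algebra $\mathfrak{n}(\mathfrak{g},\mathfrak{h})$, is naturally reductive.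
   Context: $B$ is the Killing form of the compact semisimple Lie algebra $\mathfrak{g}$; $\mathfrak{h}\subset\mathfrak{g}$ is a subalgebra and $\mathfrak{m}$ its $B$-orthogonal complement with $[\mathfrak{h},\mathfrak{m}]\subset\mathfrak{m}$, $[\mathfrak{m},\mathfrak{m}]\subset\mathfrak{h}$ (symmetric pair), and the pair is irreducible if $\operatorname{ad}(\mathfrak{h})$ acts irreducibly on $\mathfrak{m}$. Hermitian: $J:\mathfrak{m}\to\mathfrak{m}$ is $B$-orthogonal with $J^2=-I$, and its extension to $\mathfrak{g}$ by $J|_{\mathfrak{h}}=0$ satisfies $J[x,y]=[x,Jy]$ for $x\in\mathfrak{h}$, $y\in\mathfrak{m}$, and $N_J(x,y)\in\mathfrak{h}$ for $x,y\in\mathfrak{g}$. A complex structure $\mathbb{J}$ is abelian if $[\mathbb{J}x,\mathbb{J}y]=[x,y]$ for all $x,y$. Torsion 3-form: $c(x,y,z)=-\langle[\mathbb{J}x,\mathbb{J}y],z\rangle-\langle[\mathbb{J}y,\mathbb{J}z],x\rangle-\langle[\mathbb{J}z,\mathbb{J}x],y\rangle$; pluriclosed means $dc=0$ for the Chevalley–Eilenberg differential. *)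

theory Defs
  imports "HOL-Analysis.Analysis"
begin

(* A finite-dimensional real Lie algebra is modelled on a euclidean_space type 'g
   (only its real vector space structure and a basis are used; its inner product
   plays no role except to compute traces, which are basis independent). *)

definition lie_algebra :: "('g::euclidean_space \<Rightarrow> 'g \<Rightarrow> 'g) \<Rightarrow> bool" where
  "lie_algebra br \<longleftrightarrow> bilinear br \<and> (\<forall>x. br x x = 0) \<and>
     (\<forall>x y z. br x (br y z) + br y (br z x) + br z (br x y) = 0)"

definition lin_trace :: "('a::euclidean_space \<Rightarrow> 'a) \<Rightarrow> real" where
  "lin_trace f = (\<Sum>b\<in>Basis. inner (f b) b)"

definition killing :: "('g::euclidean_space \<Rightarrow> 'g \<Rightarrow> 'g) \<Rightarrow> 'g \<Rightarrow> 'g \<Rightarrow> real" where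
  "killing br x y = lin_trace (\<lambda>z. br x (br y z))"

definition compact_semisimple :: "('g::euclidean_space \<Rightarrow> 'g \<Rightarrow> 'g) \<Rightarrow> bool" where
  "compact_semisimple br \<longleftrightarrow> lie_algebra br \<and> (\<forall>x. x \<noteq> 0 \<longrightarrow> killing br x x < 0)"

definition m_of :: "('g::euclidean_space \<Rightarrow> 'g \<Rightarrow> 'g) \<Rightarrow> 'g set \<Rightarrow> 'g set" where
  "m_of br h = {x. \<forall>z\<in>h. killing br x z = 0}"

definition symmetric_pair :: "('g::euclidean_space \<Rightarrow> 'g \<Rightarrow> 'g) \<Rightarrow> 'g set \<Rightarrow> bool" where
  "symmetric_pair br h \<longleftrightarrow> subspace h \<and> (\<forall>z\<in>h. \<forall>z'\<in>h. br z z' \<in> h) \<and>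
     (\<forall>z\<in>h. \<forall>x\<in>m_of br h. br z x \<in> m_of br h) \<and>
     (\<forall>x\<in>m_of br h. \<forall>y\<in>m_of br h. br x y \<in> h)"

definition irreducible_pair :: "('g::euclidean_space \<Rightarrow> 'g \<Rightarrow> 'g) \<Rightarrow> 'g set \<Rightarrow> bool" where
  "irreducible_pair br h \<longleftrightarrow>
     (\<forall>W. subspace W \<and> W \<subseteq> m_of br h \<and> (\<forall>z\<in>h. \<forall>x\<in>W. br z x \<in> W)
           \<longrightarrow> W = {0} \<or> W = m_of br h)"

definition nijenhuis :: "('a \<Rightarrow> 'a \<Rightarrow> 'a::real_vector) \<Rightarrow> ('a \<Rightarrow> 'a) \<Rightarrow> 'a \<Rightarrow> 'a \<Rightarrow> 'a" where
  "nijenhuis br J x y = br (J x) (J y) - J (br (J x) y) - J (br x (J y)) - br x y"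

definition hermitian_symmetric_pair ::
  "('g::euclidean_space \<Rightarrow> 'g \<Rightarrow> 'g) \<Rightarrow> 'g set \<Rightarrow> ('g \<Rightarrow> 'g) \<Rightarrow> bool" where
  "hermitian_symmetric_pair br h J \<longleftrightarrow> symmetric_pair br h \<and> linear J \<and>
     (\<forall>z\<in>h. J z = 0) \<and>
     (\<forall>x\<in>m_of br h. J x \<in> m_of br h \<and> J (J x) = - x) \<and>
     (\<forall>x\<in>m_of br h. \<forall>y\<in>m_of br h. killing br (J x) (J y) = killing br x y) \<and>
     (\<forall>x\<in>h. \<forall>y\<in>m_of br h. J (br x y) = br x (J y)) \<and>
     (\<forall>x y. nijenhuis br J x y \<in> h)"

definition proj_m :: "('g::euclidean_space \<Rightarrow> 'g \<Rightarrow> 'g) \<Rightarrow> 'g set \<Rightarrow> 'g \<Rightarrow> 'g" where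
  "proj_m br h v = (THE x. x \<in> m_of br h \<and> v - x \<in> h)"

(* R^s + n(g,h), realised inside real \<times> 'g *)
definition Vs :: "nat \<Rightarrow> (real \<times> 'g::euclidean_space) set" where
  "Vs s = {u. s = 0 \<longrightarrow> fst u = 0}"

definition Hs :: "'g::euclidean_space set \<Rightarrow> nat \<Rightarrow> (real \<times> 'g) set" where
  "Hs h s = {u \<in> Vs s. snd u \<in> h}"

definition nbr :: "('g::euclidean_space \<Rightarrow> 'g \<Rightarrow> 'g) \<Rightarrow> 'g set \<Rightarrow> real \<times> 'g \<Rightarrow> real \<times> 'g \<Rightarrow> real \<times> 'g" where
  "nbr br h u w = (0, br (proj_m br h (snd u)) (proj_m br h (snd w)))"

definition nip :: "('g::euclidean_space \<Rightarrow> 'g \<Rightarrow> 'g) \<Rightarrow> real \<times> 'g \<Rightarrow> real \<times> 'g \<Rightarrow> real" where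
  "nip br u w = fst u * fst w - killing br (snd u) (snd w)"

definition adapted_cs ::
  "('g::euclidean_space \<Rightarrow> 'g \<Rightarrow> 'g) \<Rightarrow> 'g set \<Rightarrow> ('g \<Rightarrow> 'g) \<Rightarrow> nat \<Rightarrow> (real \<times> 'g \<Rightarrow> real \<times> 'g) \<Rightarrow> bool" where
  "adapted_cs br h J s Jc \<longleftrightarrow> linear Jc \<and>
     (\<forall>x\<in>m_of br h. Jc (0, x) = (0, J x)) \<and>
     (\<forall>u\<in>Hs h s. Jc u \<in> Hs h s \<and> Jc (Jc u) = - u) \<and>
     (\<forall>u\<in>Hs h s. \<forall>w\<in>Hs h s. nip br (Jc u) (Jc w) = nip br u w)"

definition complex_structure :: "'a set \<Rightarrow> ('a \<Rightarrow> 'a \<Rightarrow> 'a::real_vector) \<Rightarrow> ('a \<Rightarrow> 'a) \<Rightarrow> bool" where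
  "complex_structure V br Jc \<longleftrightarrow> linear Jc \<and> (\<forall>u\<in>V. Jc u \<in> V \<and> Jc (Jc u) = - u) \<and>
     (\<forall>u\<in>V. \<forall>w\<in>V. nijenhuis br Jc u w = 0)"

definition abelian_cs :: "'a set \<Rightarrow> ('a \<Rightarrow> 'a \<Rightarrow> 'a::real_vector) \<Rightarrow> ('a \<Rightarrow> 'a) \<Rightarrow> bool" where
  "abelian_cs V br Jc \<longleftrightarrow> complex_structure V br Jc \<and>
     (\<forall>u\<in>V. \<forall>w\<in>V. br (Jc u) (Jc w) = br u w)"

definition hermitian_metric :: "'a set \<Rightarrow> ('a \<Rightarrow> 'a \<Rightarrow> real) \<Rightarrow> ('a \<Rightarrow> 'a) \<Rightarrow> bool" where
  "hermitian_metric V ip Jc \<longleftrightarrow> (\<forall>u\<in>V. \<forall>w\<in>V. ip (Jc u) (Jc w) = ip u w)"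

definition torsion3 :: "('a \<Rightarrow> 'a \<Rightarrow> 'a) \<Rightarrow> ('a \<Rightarrow> 'a \<Rightarrow> real) \<Rightarrow> ('a \<Rightarrow> 'a) \<Rightarrow> 'a \<Rightarrow> 'a \<Rightarrow> 'a \<Rightarrow> real" where
  "torsion3 br ip Jc x y z =
     - ip (br (Jc x) (Jc y)) z - ip (br (Jc y) (Jc z)) x - ip (br (Jc z) (Jc x)) y"

(* Chevalley--Eilenberg differential of a 3-form (trivial coefficients) *)
definition ce_d3 :: "('a \<Rightarrow> 'a \<Rightarrow> 'a) \<Rightarrow> ('a \<Rightarrow> 'a \<Rightarrow> 'a \<Rightarrow> real) \<Rightarrow> 'a \<Rightarrow> 'a \<Rightarrow> 'a \<Rightarrow> 'a \<Rightarrow> real" where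
  "ce_d3 br c x0 x1 x2 x3 =
     - c (br x0 x1) x2 x3 + c (br x0 x2) x1 x3 - c (br x0 x3) x1 x2
     - c (br x1 x2) x0 x3 + c (br x1 x3) x0 x2 - c (br x2 x3) x0 x1"

definition pluriclosed :: "'a set \<Rightarrow> ('a \<Rightarrow> 'a \<Rightarrow> 'a) \<Rightarrow> ('a \<Rightarrow> 'a \<Rightarrow> real) \<Rightarrow> ('a \<Rightarrow> 'a) \<Rightarrow> bool" where
  "pluriclosed V br ip Jc \<longleftrightarrow>
     (\<forall>x0\<in>V. \<forall>x1\<in>V. \<forall>x2\<in>V. \<forall>x3\<in>V. ce_d3 br (torsion3 br ip Jc) x0 x1 x2 x3 = 0)"

definition skew_derivation :: "'a set \<Rightarrow> ('a \<Rightarrow> 'a \<Rightarrow> 'a::real_vector) \<Rightarrow> ('a \<Rightarrow> 'a \<Rightarrow> real) \<Rightarrow> ('a \<Rightarrow> 'a) \<Rightarrow> bool" where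
  "skew_derivation V br ip D \<longleftrightarrow> linear D \<and> (\<forall>u\<in>V. D u \<in> V) \<and>
     (\<forall>u\<in>V. \<forall>w\<in>V. D (br u w) = br (D u) w + br u (D w)) \<and>
     (\<forall>u\<in>V. \<forall>w\<in>V. ip (D u) w + ip u (D w) = 0)"

(* Natural reductivity of the left-invariant metric on the simply connected Lie group
   with metric Lie algebra (V, br, ip), with respect to a transitive isometry group K \<ltimes> N
   (K a connected group of isometric automorphisms, Lie algebra k of skew derivations).
   The reductive complement p of k in k \<ltimes> V is the graph {(phi X, X)} of a linear
   map phi : V \<rightarrow> k; Ad(K)-invariance of p is the equivariance of phi, and
   [ (phi X, X), (phi Y, Y) ]_p corresponds to phi X Y - phi Y X + [X,Y]. *)
definition naturally_reductive :: "'a set \<Rightarrow> ('a \<Rightarrow> 'a \<Rightarrow> 'a::real_vector) \<Rightarrow> ('a \<Rightarrow> 'a \<Rightarrow> real) \<Rightarrow> bool" where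
  "naturally_reductive V br ip \<longleftrightarrow>
    (\<exists>(K :: ('a \<Rightarrow> 'a) set) (\<phi> :: 'a \<Rightarrow> 'a \<Rightarrow> 'a).
       (\<forall>D\<in>K. skew_derivation V br ip D) \<and>
       (\<exists>F\<in>K. \<forall>u\<in>V. F u = 0) \<and>
       (\<forall>D\<in>K. \<forall>E\<in>K. \<forall>c::real. \<exists>F\<in>K. \<forall>u\<in>V. F u = c *\<^sub>R D u + E u) \<and>
       (\<forall>D\<in>K. \<forall>E\<in>K. \<exists>F\<in>K. \<forall>u\<in>V. F u = D (E u) - E (D u)) \<and>
       (\<forall>X\<in>V. \<phi> X \<in> K) \<and>
       (\<forall>X\<in>V. \<forall>Y\<in>V. \<forall>c::real. \<forall>u\<in>V. \<phi> (c *\<^sub>R X + Y) u = c *\<^sub>R \<phi> X u + \<phi> Y u) \<and>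
       (\<forall>D\<in>K. \<forall>X\<in>V. \<forall>u\<in>V. D (\<phi> X u) - \<phi> X (D u) = \<phi> (D X) u) \<and>
       (\<forall>X\<in>V. \<forall>Y\<in>V. \<forall>Z\<in>V.
          ip (\<phi> X Y - \<phi> Y X + br X Y) Z + ip Y (\<phi> X Z - \<phi> Z X + br X Z) = 0))"

end

theory Submission
  imports Defs
begin

text \<open>Since \<open>J\<close> preserves \<open>B\<close> and commutes with \<open>ad h\<close>, ad-invariance of \<open>B\<close> shows that
  \<open>[Jx, Jy] - [x, y]\<close>, an element of \<open>h\<close>, is \<open>B\<close>-orthogonal to \<open>h\<close>; so \<open>J\<close> is abelian
  on \<open>m\<close>. The bracket of \<open>R^s + n(g, h)\<close> only sees \<open>m\<close>-components, hence every adapted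
  complex structure is abelian, and it is Hermitian since it preserves the metric on both
  \<open>R^s + h\<close> and \<open>m\<close>. The algebra is two-step nilpotent, so \<open>dc = 0\<close> reduces to
  \<open>B([a,b],[c,d]) - B([a,c],[b,d]) + B([a,d],[b,c]) = 0\<close>, which is the Jacobi identity
  paired with \<open>a\<close>. Natural reductivity is witnessed by \<open>K = ad h\<close> acting by skew derivations,
  with reductive complement the graph of \<open>X \<mapsto> ad (h-component of X)\<close>.\<close>

section \<open>Lie algebras and the Killing form\<close>

lemma lie_algebra_bilinear: "lie_algebra br \<Longrightarrow> bilinear br"
  by (simp add: lie_algebra_def)

lemma lie_linear: "lie_algebra br \<Longrightarrow> linear (br a)"
  using lie_algebra_bilinear unfolding bilinear_def by blast

lemma lie_antisym:
  assumes "lie_algebra br"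
  shows "br x y = - br y x"
proof -
  have b: "bilinear br" using lie_algebra_bilinear[OF assms] .
  have "0 = br (x + y) (x + y)" using assms by (simp add: lie_algebra_def)
  also have "\<dots> = br x x + br x y + br y x + br y y"
    by (simp add: bilinear_ladd[OF b] bilinear_radd[OF b])
  also have "\<dots> = br x y + br y x" using assms by (simp add: lie_algebra_def)
  finally show ?thesis by (simp add: eq_neg_iff_add_eq_0)
qed

lemma lie_jacobi:
  assumes "lie_algebra br"
  shows "br a (br b c) = br (br a b) c + br b (br a c)"
proof -
  have b: "bilinear br" using lie_algebra_bilinear[OF assms] .
  have "br a (br b c) + br b (br c a) + br c (br a b) = 0"
    using assms by (simp add: lie_algebra_def)
  moreover have "br b (br c a) = - br b (br a c)"
    using lie_antisym[OF assms, of c a] by (simp add: bilinear_rneg[OF b])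
  moreover have "br c (br a b) = - br (br a b) c" by (rule lie_antisym[OF assms])
  ultimately show ?thesis by (simp add: algebra_simps)
qed

lemma lie_bracket_add_identity:
  assumes "lie_algebra br"
  shows "br a (b + y) - br b (a + x) + br x y = br (a + x) (b + y) + br a b"
proof -
  have bl: "bilinear br" using lie_algebra_bilinear[OF assms] .
  have "br a (b + y) = br a b + br a y"
    by (simp add: bilinear_radd[OF bl])
  moreover have "br b (a + x) = - br a b - br x b"
    using lie_antisym[OF assms, of b a] lie_antisym[OF assms, of b x]
    by (simp add: bilinear_radd[OF bl])
  moreover have "br (a + x) (b + y) = br a b + br a y + br x b + br x y"
    by (simp add: bilinear_ladd[OF bl] bilinear_radd[OF bl])
  ultimately show ?thesis by simp
qed

lemma lin_trace_comp_expand: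
  fixes A B :: "'a::euclidean_space \<Rightarrow> 'a"
  assumes "linear A"
  shows "lin_trace (\<lambda>x. A (B x)) = (\<Sum>b\<in>Basis. \<Sum>c\<in>Basis. inner (B b) c * inner (A c) b)"
proof -
  have "A (B b) = (\<Sum>c\<in>Basis. inner (B b) c *\<^sub>R A c)" for b
  proof -
    have "A (B b) = A (\<Sum>c\<in>Basis. inner (B b) c *\<^sub>R c)"
      by (simp add: euclidean_representation)
    also have "\<dots> = (\<Sum>c\<in>Basis. inner (B b) c *\<^sub>R A c)"
      by (simp add: linear_sum[OF assms] linear_scale[OF assms])
    finally show ?thesis .
  qed
  then show ?thesis unfolding lin_trace_def by (simp add: inner_sum_left)
qed

lemma lin_trace_comp_commute:
  fixes A B :: "'a::euclidean_space \<Rightarrow> 'a"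
  assumes "linear A" "linear B"
  shows "lin_trace (\<lambda>x. A (B x)) = lin_trace (\<lambda>x. B (A x))"
  unfolding lin_trace_comp_expand[OF assms(1)] lin_trace_comp_expand[OF assms(2)]
  by (subst sum.swap) (simp add: mult.commute)

lemma lin_trace_diff: "lin_trace (\<lambda>x. f x - g x) = lin_trace f - lin_trace g"
  unfolding lin_trace_def by (simp add: inner_diff_left sum_subtractf)

lemma killing_sym:
  assumes "lie_algebra br"
  shows "killing br x y = killing br y x"
  unfolding killing_def
  using lin_trace_comp_commute[OF lie_linear[OF assms] lie_linear[OF assms]] .

lemma bilinear_killing:
  assumes "lie_algebra br"
  shows "bilinear (killing br)"
proof -
  have b: "bilinear br" using lie_algebra_bilinear[OF assms] .
  show ?thesis
    unfolding bilinear_def linear_iff killing_def lin_trace_def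
    by (simp add: bilinear_ladd[OF b] bilinear_radd[OF b] bilinear_lmul[OF b]
        bilinear_rmul[OF b] inner_add_left sum.distrib sum_distrib_left)
qed

text \<open>Since \<open>ad\<close> is a representation, \<open>ad [a, b] o ad c\<close> and \<open>ad a o ad [b, c]\<close> differ by
  the commutator of \<open>ad a o ad c\<close> with \<open>ad b\<close>, which is traceless.\<close>
lemma killing_invariant:
  assumes "lie_algebra br"
  shows "killing br (br a b) c = killing br a (br b c)"
proof -
  have b: "bilinear br" using lie_algebra_bilinear[OF assms] .
  have ad: "br (br a b) z = br a (br b z) - br b (br a z)" for a b z
    using lie_jacobi[OF assms, of a b z] by simp
  have "killing br (br a b) c
      = lin_trace (\<lambda>z. br a (br b (br c z))) - lin_trace (\<lambda>z. br b (br a (br c z)))"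
    unfolding killing_def ad by (rule lin_trace_diff)
  also have "lin_trace (\<lambda>z. br b (br a (br c z))) = lin_trace (\<lambda>z. br a (br c (br b z)))"
    using lin_trace_comp_commute[OF lie_linear[OF assms, of b]
        linear_compose[OF lie_linear[OF assms, of c] lie_linear[OF assms, of a]]]
    by (simp add: o_def)
  also have "lin_trace (\<lambda>z. br a (br b (br c z))) - \<dots>
      = lin_trace (\<lambda>z. br a (br b (br c z)) - br a (br c (br b z)))"
    by (rule lin_trace_diff[symmetric])
  also have "\<dots> = killing br a (br b c)"
    unfolding killing_def ad by (simp add: bilinear_rsub[OF b])
  finally show ?thesis .
qed

lemma killing_ad_skew:
  assumes "lie_algebra br"
  shows "killing br (br z a) b + killing br a (br z b) = 0"
  using killing_invariant[OF assms, of a z b] lie_antisym[OF assms, of z a]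
  by (simp add: bilinear_lneg[OF bilinear_killing[OF assms]])

lemma killing_bracket_cyclic:
  assumes "lie_algebra br"
  shows "killing br (br a b) (br c d) - killing br (br a c) (br b d)
           + killing br (br a d) (br b c) = 0"
proof -
  have kb: "bilinear (killing br)" using bilinear_killing[OF assms] .
  have "br b (br c d) + br c (br d b) + br d (br b c) = 0"
    using assms by (simp add: lie_algebra_def)
  moreover have "br c (br d b) = - br c (br b d)"
    using lie_antisym[OF assms, of d b] by (simp add: bilinear_rneg[OF lie_algebra_bilinear[OF assms]])
  ultimately have "br b (br c d) - br c (br b d) + br d (br b c) = 0" by simp
  then have "killing br a (br b (br c d) - br c (br b d) + br d (br b c)) = 0"
    by (simp add: bilinear_rzero[OF kb])
  then show ?thesis
    by (simp add: killing_invariant[OF assms] bilinear_radd[OF kb] bilinear_rsub[OF kb])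
qed

section \<open>Positive definite symmetric bilinear forms\<close>

definition pos_def_on :: "('a::real_vector \<Rightarrow> 'a \<Rightarrow> real) \<Rightarrow> 'a set \<Rightarrow> bool" where
  "pos_def_on q W \<longleftrightarrow> bilinear q \<and> (\<forall>x y. q x y = q y x) \<and> (\<forall>x\<in>W. x \<noteq> 0 \<longrightarrow> q x x > 0)"

lemma pos_def_on_unit_complement:
  fixes q :: "'a::euclidean_space \<Rightarrow> 'a \<Rightarrow> real"
  assumes pd: "pos_def_on q W" and W: "subspace W" and d: "dim W = Suc n"
  obtains e where "e \<in> W" "q e e = 1"
    "subspace {x\<in>W. q e x = 0}" "dim {x\<in>W. q e x = 0} = n"
proof -
  have b: "bilinear q" using pd by (simp add: pos_def_on_def)
  have "\<not> W \<subseteq> {0}" using d by (metis dim_eq_0 nat.distinct(1))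
  then obtain w where w: "w \<in> W" "w \<noteq> 0" by blast
  have qw: "q w w > 0" using pd w by (simp add: pos_def_on_def)
  define e where "e = (1 / sqrt (q w w)) *\<^sub>R w"
  have eW: "e \<in> W" unfolding e_def using W w by (simp add: subspace_scale)
  have ee: "q e e = 1" unfolding e_def using qw
    by (simp add: bilinear_lmul[OF b] bilinear_rmul[OF b] real_sqrt_mult[symmetric])
  define W' where "W' = {x\<in>W. q e x = 0}"
  have W': "subspace W'" unfolding W'_def subspace_def using W
    by (simp add: subspace_def bilinear_rzero[OF b] bilinear_radd[OF b] bilinear_rmul[OF b])
  have "W = span (insert e W')"
  proof
    show "W \<subseteq> span (insert e W')"
    proof
      fix x assume x: "x \<in> W"
      have "x - q e x *\<^sub>R e \<in> W'" unfolding W'_def using x eW W ee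
        by (simp add: subspace_diff subspace_scale bilinear_rsub[OF b] bilinear_rmul[OF b])
      then have "(x - q e x *\<^sub>R e) + q e x *\<^sub>R e \<in> span (insert e W')"
        by (intro span_add) (simp_all add: span_base span_scale)
      then show "x \<in> span (insert e W')" by simp
    qed
    show "span (insert e W') \<subseteq> W"
      by (rule span_minimal) (use eW W in \<open>auto simp: W'_def\<close>)
  qed
  moreover have "e \<notin> span W'"
  proof -
    have "e \<notin> W'" using ee by (simp add: W'_def)
    with W' show ?thesis by (metis span_eq_iff)
  qed
  ultimately have "dim W = dim W' + 1" by (metis dim_span dim_insert)
  with d have "dim W' = n" by simp
  with eW ee W' show ?thesis using that unfolding W'_def by blast
qed

lemma pos_def_on_orthonormal_expansion:
  fixes q :: "'a::euclidean_space \<Rightarrow> 'a \<Rightarrow> real"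
  assumes "pos_def_on q W" "subspace W" "dim W = n"
  shows "\<exists>e. (\<forall>i<n. e i \<in> W) \<and> (\<forall>i<n. \<forall>j<n. q (e i) (e j) = (if i = j then 1 else 0)) \<and>
             (\<forall>x\<in>W. x = (\<Sum>i<n. q x (e i) *\<^sub>R e i))"
  using assms
proof (induction n arbitrary: W)
  case 0
  then show ?case by auto
next
  case (Suc n)
  have b: "bilinear q" and sym: "\<And>x y. q x y = q y x"
    using Suc.prems(1) by (auto simp: pos_def_on_def)
  obtain e0 where e0: "e0 \<in> W" "q e0 e0 = 1"
    and W': "subspace {x\<in>W. q e0 x = 0}" "dim {x\<in>W. q e0 x = 0} = n"
    using pos_def_on_unit_complement[OF Suc.prems] .
  have "pos_def_on q {x\<in>W. q e0 x = 0}"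
    using Suc.prems(1) by (simp add: pos_def_on_def)
  then obtain e' where e': "\<forall>i<n. e' i \<in> {x\<in>W. q e0 x = 0}"
     "\<forall>i<n. \<forall>j<n. q (e' i) (e' j) = (if i = j then 1 else 0)"
     "\<forall>x\<in>{x\<in>W. q e0 x = 0}. x = (\<Sum>i<n. q x (e' i) *\<^sub>R e' i)"
    using Suc.IH W' by blast
  define e where "e = (\<lambda>i. case i of 0 \<Rightarrow> e0 | Suc j \<Rightarrow> e' j)"
  have "\<forall>i<Suc n. e i \<in> W" using e0 e'(1) by (auto simp: e_def split: nat.split)
  moreover have "\<forall>i<Suc n. \<forall>j<Suc n. q (e i) (e j) = (if i = j then 1 else 0)"
    using e0 e'(1,2) sym by (auto simp: e_def split: nat.split)
  moreover have "x = (\<Sum>i<Suc n. q x (e i) *\<^sub>R e i)" if x: "x \<in> W" for x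
  proof -
    define x' where "x' = x - q x e0 *\<^sub>R e0"
    have x': "x' \<in> {x\<in>W. q e0 x = 0}" unfolding x'_def using x e0 Suc.prems(2)
      by (simp add: subspace_diff subspace_scale bilinear_rsub[OF b] bilinear_rmul[OF b] sym)
    have "q x' (e' i) = q x (e' i)" if "i < n" for i
      using e'(1) that unfolding x'_def by (simp add: bilinear_lsub[OF b] bilinear_lmul[OF b])
    then have "x' = (\<Sum>i<n. q x (e' i) *\<^sub>R e' i)"
      using e'(3) x' by (metis (no_types, lifting) lessThan_iff sum.cong)
    then have "x = q x e0 *\<^sub>R e0 + (\<Sum>i<n. q x (e' i) *\<^sub>R e' i)"
      unfolding x'_def by (simp add: algebra_simps)
    then show ?thesis by (subst sum.lessThan_Suc_shift) (simp add: e_def)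
  qed
  ultimately show ?case by blast
qed

lemma pos_def_on_orthogonal_projection:
  fixes q :: "'a::euclidean_space \<Rightarrow> 'a \<Rightarrow> real"
  assumes pd: "pos_def_on q W" and W: "subspace W"
  obtains P where "linear P" "\<And>v. P v \<in> W" "\<And>v w. w \<in> W \<Longrightarrow> q (v - P v) w = 0"
proof -
  have b: "bilinear q" using pd by (simp add: pos_def_on_def)
  obtain e where e: "\<forall>i<dim W. e i \<in> W"
     "\<forall>i<dim W. \<forall>j<dim W. q (e i) (e j) = (if i = j then 1 else 0)"
     "\<forall>x\<in>W. x = (\<Sum>i<dim W. q x (e i) *\<^sub>R e i)"
    using pos_def_on_orthonormal_expansion[OF pd W refl] by blast
  define P where "P = (\<lambda>v. \<Sum>i<dim W. q v (e i) *\<^sub>R e i)"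
  have lq: "linear (\<lambda>x. q x y)" and rq: "linear (q x)" for x y
    using b unfolding bilinear_def by auto
  have "linear P" unfolding P_def
    by (rule linear_compose_sum)
      (simp add: linear_iff bilinear_ladd[OF b] bilinear_lmul[OF b] scaleR_add_left)
  moreover have "P v \<in> W" for v unfolding P_def
    by (rule subspace_sum[OF W]) (simp add: e(1) W subspace_scale)
  moreover have "q (v - P v) w = 0" if w: "w \<in> W" for v w
  proof -
    have "q (P v) (e j) = q v (e j)" if "j < dim W" for j
    proof -
      have "q (P v) (e j) = (\<Sum>i<dim W. q v (e i) * q (e i) (e j))"
        unfolding P_def by (simp add: linear_sum[OF lq] bilinear_lmul[OF b])
      also have "\<dots> = (\<Sum>i<dim W. if i = j then q v (e j) else 0)"
        by (rule sum.cong) (use e(2) that in auto)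
      finally show ?thesis using that by simp
    qed
    then have "q (v - P v) (e j) = 0" if "j < dim W" for j
      using that by (simp add: bilinear_lsub[OF b])
    then have "q (v - P v) (\<Sum>i<dim W. q w (e i) *\<^sub>R e i) = 0"
      by (simp add: linear_sum[OF rq] bilinear_rmul[OF b])
    with e(3) w show ?thesis by metis
  qed
  ultimately show ?thesis using that by blast
qed

lemma sum_lessThan_double: "(\<Sum>j<2 * (k::nat). f j) = (\<Sum>i<k. f (2 * i) + f (2 * i + 1))"
  by (induction k) (simp_all add: algebra_simps)

lemma pos_def_on_orthonormal_pairs:
  fixes q :: "'a::euclidean_space \<Rightarrow> 'a \<Rightarrow> real"
  assumes pd: "pos_def_on q W" and W: "subspace W" and d: "dim W = 2 * k"
  obtains a c where "\<And>i. i < k \<Longrightarrow> a i \<in> W" "\<And>i. i < k \<Longrightarrow> c i \<in> W"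
    "\<And>i j. i < k \<Longrightarrow> j < k \<Longrightarrow> q (a i) (a j) = (if i = j then 1 else 0)"
    "\<And>i j. i < k \<Longrightarrow> j < k \<Longrightarrow> q (c i) (c j) = (if i = j then 1 else 0)"
    "\<And>i j. i < k \<Longrightarrow> j < k \<Longrightarrow> q (a i) (c j) = 0"
    "\<And>x. x \<in> W \<Longrightarrow> x = (\<Sum>i<k. q x (a i) *\<^sub>R a i + q x (c i) *\<^sub>R c i)"
proof -
  obtain e where e: "\<forall>i<2*k. e i \<in> W"
     "\<forall>i<2*k. \<forall>j<2*k. q (e i) (e j) = (if i = j then 1 else 0)"
     "\<forall>x\<in>W. x = (\<Sum>i<2*k. q x (e i) *\<^sub>R e i)"
    using pos_def_on_orthonormal_expansion[OF pd W d] by blast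
  define a c where "a i = e (2 * i)" and "c i = e (2 * i + 1)" for i
  have W_ac: "a i \<in> W" "c i \<in> W" if "i < k" for i
    using e(1) that unfolding a_def c_def by auto
  have aa: "q (a i) (a j) = (if i = j then 1 else 0)"
    and cc: "q (c i) (c j) = (if i = j then 1 else 0)" if "i < k" "j < k" for i j
    using e(2) that unfolding a_def c_def by auto
  have "2 * i \<noteq> 2 * j + 1" for i j :: nat by presburger
  then have ac: "q (a i) (c j) = 0" if "i < k" "j < k" for i j
    using e(2) that unfolding a_def c_def by simp
  have expand: "x = (\<Sum>i<k. q x (a i) *\<^sub>R a i + q x (c i) *\<^sub>R c i)" if "x \<in> W" for x
    using e(3) that unfolding a_def c_def sum_lessThan_double by blast
  show ?thesis by (rule that) (fact W_ac aa cc ac expand)+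
qed

definition pair_rotation ::
    "('a::real_vector \<Rightarrow> 'a \<Rightarrow> real) \<Rightarrow> nat \<Rightarrow> (nat \<Rightarrow> 'a) \<Rightarrow> (nat \<Rightarrow> 'a) \<Rightarrow> 'a \<Rightarrow> 'a" where
  "pair_rotation q k a c x = (\<Sum>i<k. q x (a i) *\<^sub>R c i - q x (c i) *\<^sub>R a i)"

lemma linear_pair_rotation:
  assumes "bilinear q"
  shows "linear (pair_rotation q k a c)"
  unfolding pair_rotation_def[abs_def]
  by (rule linear_compose_sum)
    (simp add: linear_iff bilinear_ladd[OF assms] bilinear_lmul[OF assms] algebra_simps)

lemma pair_rotation_skew:
  assumes b: "bilinear q" and sym: "\<And>x y. q x y = q y x"
  shows "q (pair_rotation q k a c x) y = - q x (pair_rotation q k a c y)"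
proof -
  have lq: "linear (\<lambda>x. q x y)" and rq: "linear (q x)" for x y
    using b unfolding bilinear_def by auto
  have "q (pair_rotation q k a c x) y = (\<Sum>i<k. q x (a i) * q (c i) y - q x (c i) * q (a i) y)"
    unfolding pair_rotation_def
    by (simp add: linear_sum[OF lq] bilinear_lsub[OF b] bilinear_lmul[OF b])
  also have "\<dots> = - (\<Sum>i<k. q y (a i) * q x (c i) - q y (c i) * q x (a i))"
    unfolding sum_negf[symmetric] by (rule sum.cong) (simp_all add: sym)
  also have "(\<Sum>i<k. q y (a i) * q x (c i) - q y (c i) * q x (a i)) = q x (pair_rotation q k a c y)"
    unfolding pair_rotation_def
    by (simp add: linear_sum[OF rq] bilinear_rsub[OF b] bilinear_rmul[OF b])
  finally show ?thesis .
qed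

lemma pos_def_on_orthogonal_complex_structure:
  fixes q :: "'a::euclidean_space \<Rightarrow> 'a \<Rightarrow> real"
  assumes pd: "pos_def_on q W" and W: "subspace W" and d: "even (dim W)"
  obtains L where "linear L" "\<And>x. L x \<in> W" "\<And>x. x \<in> W \<Longrightarrow> L (L x) = - x"
    "\<And>x y. x \<in> W \<Longrightarrow> y \<in> W \<Longrightarrow> q (L x) (L y) = q x y"
proof -
  have b: "bilinear q" and sym: "\<And>x y. q x y = q y x"
    using pd by (auto simp: pos_def_on_def)
  obtain k where k: "dim W = 2 * k" using d by blast
  obtain a c where W_ac: "\<And>i. i < k \<Longrightarrow> a i \<in> W" "\<And>i. i < k \<Longrightarrow> c i \<in> W"
    and aa: "\<And>i j. i < k \<Longrightarrow> j < k \<Longrightarrow> q (a i) (a j) = (if i = j then 1 else 0)"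
    and cc: "\<And>i j. i < k \<Longrightarrow> j < k \<Longrightarrow> q (c i) (c j) = (if i = j then 1 else 0)"
    and ac: "\<And>i j. i < k \<Longrightarrow> j < k \<Longrightarrow> q (a i) (c j) = 0"
    and expand: "\<And>x. x \<in> W \<Longrightarrow> x = (\<Sum>i<k. q x (a i) *\<^sub>R a i + q x (c i) *\<^sub>R c i)"
    using pos_def_on_orthonormal_pairs[OF pd W k] by blast
  let ?L = "pair_rotation q k a c"
  have skew: "q (?L x) y = - q x (?L y)" for x y by (rule pair_rotation_skew[OF b sym])
  have "?L x \<in> W" for x unfolding pair_rotation_def
    by (rule subspace_sum[OF W]) (simp add: W_ac W subspace_diff subspace_scale)
  moreover have La: "?L (a j) = c j" and Lc: "?L (c j) = - a j" if "j < k" for j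
  proof -
    have "?L (a j) = (\<Sum>i<k. if j = i then c i else 0)"
      unfolding pair_rotation_def by (rule sum.cong) (use that aa ac in auto)
    then show "?L (a j) = c j" using that by simp
    have "?L (c j) = (\<Sum>i<k. if j = i then - a i else 0)"
      unfolding pair_rotation_def by (rule sum.cong) (use that cc ac sym in auto)
    then show "?L (c j) = - a j" using that by simp
  qed
  have LL: "?L (?L x) = - x" if "x \<in> W" for x
  proof -
    have "?L (?L x) = (\<Sum>i<k. q (?L x) (a i) *\<^sub>R c i - q (?L x) (c i) *\<^sub>R a i)"
      by (simp add: pair_rotation_def[of q k a c "?L x"])
    also have "\<dots> = (\<Sum>i<k. - (q x (a i) *\<^sub>R a i + q x (c i) *\<^sub>R c i))"
      by (rule sum.cong) (simp_all add: skew La Lc bilinear_rneg[OF b] algebra_simps)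
    also have "\<dots> = - x" unfolding sum_negf by (simp only: expand[OF that, symmetric])
    finally show ?thesis .
  qed
  moreover have "q (?L x) (?L y) = q x y" if "x \<in> W" "y \<in> W" for x y
    using skew[of x "?L y"] LL[OF that(2)] by (simp add: bilinear_rneg[OF b])
  ultimately show ?thesis using that linear_pair_rotation[OF b] by blast
qed

section \<open>Abelian complex structures on two-step nilpotent Lie algebras\<close>

lemma abelian_csI:
  assumes lin: "linear Jc" and bil: "bilinear br"
    and closed: "\<And>u. u \<in> V \<Longrightarrow> Jc u \<in> V"
    and involutive: "\<And>u. u \<in> V \<Longrightarrow> Jc (Jc u) = - u"
    and abelian: "\<And>u w. u \<in> V \<Longrightarrow> w \<in> V \<Longrightarrow> br (Jc u) (Jc w) = br u w"
  shows "abelian_cs V br Jc"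
proof -
  have "nijenhuis br Jc u w = 0" if uw: "u \<in> V" "w \<in> V" for u w
  proof -
    have "br (Jc u) (Jc (Jc w)) = br u (Jc w)" using abelian closed uw by blast
    then have "br u (Jc w) = - br (Jc u) w"
      using involutive[OF uw(2)] by (simp add: bilinear_rneg[OF bil])
    then have "br (Jc u) w + br u (Jc w) = 0" by simp
    then have "Jc (br (Jc u) w) + Jc (br u (Jc w)) = 0"
      by (metis linear_add[OF lin] linear_0[OF lin])
    then show ?thesis
      unfolding nijenhuis_def abelian[OF uw] by (simp add: algebra_simps)
  qed
  then show ?thesis
    using lin closed involutive abelian by (simp add: abelian_cs_def complex_structure_def)
qed

lemma pluriclosed_two_step_nilpotentI:
  assumes ip: "bilinear ip" "\<And>u w. ip u w = ip w u"
    and closed: "\<And>u w. u \<in> V \<Longrightarrow> w \<in> V \<Longrightarrow> br u w \<in> V"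
    and abelian: "\<And>u w. u \<in> V \<Longrightarrow> w \<in> V \<Longrightarrow> br (Jc u) (Jc w) = br u w"
    and two_step: "\<And>a b w. a \<in> V \<Longrightarrow> b \<in> V \<Longrightarrow> w \<in> V \<Longrightarrow> br (br a b) w = 0"
      "\<And>a b w. a \<in> V \<Longrightarrow> b \<in> V \<Longrightarrow> w \<in> V \<Longrightarrow> br w (br a b) = 0"
    and cyclic: "\<And>a b c d. a \<in> V \<Longrightarrow> b \<in> V \<Longrightarrow> c \<in> V \<Longrightarrow> d \<in> V \<Longrightarrow>
      ip (br a b) (br c d) - ip (br a c) (br b d) + ip (br a d) (br b c) = 0"
  shows "pluriclosed V br ip Jc"
  unfolding pluriclosed_def
proof (intro ballI)
  have torsion: "torsion3 br ip Jc (br a b) v w = - ip (br a b) (br v w)"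
    if "a \<in> V" "b \<in> V" "v \<in> V" "w \<in> V" for a b v w
    using that closed[OF that(1,2)]
    by (simp add: torsion3_def abelian two_step bilinear_lzero[OF ip(1)] ip(2)[of "br v w"])
  fix x0 x1 x2 x3 assume x: "x0 \<in> V" "x1 \<in> V" "x2 \<in> V" "x3 \<in> V"
  show "ce_d3 br (torsion3 br ip Jc) x0 x1 x2 x3 = 0"
    unfolding ce_d3_def using cyclic[OF x] x
    by (simp add: torsion ip(2)[of "br x1 x2"] ip(2)[of "br x1 x3"] ip(2)[of "br x2 x3"])
qed

section \<open>Compact Hermitian symmetric pairs\<close>

locale compact_hermitian_symmetric_pair =
  fixes br :: "'g::euclidean_space \<Rightarrow> 'g \<Rightarrow> 'g" and h :: "'g set" and J :: "'g \<Rightarrow> 'g"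
  assumes compact_semisimple: "compact_semisimple br"
    and hermitian_pair: "hermitian_symmetric_pair br h J"
begin

lemma lie_algebra_br: "lie_algebra br"
  using compact_semisimple by (simp add: compact_semisimple_def)

lemma killing_negative: "x \<noteq> 0 \<Longrightarrow> killing br x x < 0"
  using compact_semisimple by (simp add: compact_semisimple_def)

lemma bilinear_br: "bilinear br"
  using lie_algebra_bilinear[OF lie_algebra_br] .

lemma bilinear_B: "bilinear (killing br)"
  using bilinear_killing[OF lie_algebra_br] .

lemma
  shows subspace_h: "subspace h"
    and bracket_h_h: "z \<in> h \<Longrightarrow> z' \<in> h \<Longrightarrow> br z z' \<in> h"
    and bracket_h_m: "z \<in> h \<Longrightarrow> x \<in> m_of br h \<Longrightarrow> br z x \<in> m_of br h"
    and bracket_m_m: "x \<in> m_of br h \<Longrightarrow> y \<in> m_of br h \<Longrightarrow> br x y \<in> h"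
  using hermitian_pair by (simp_all add: hermitian_symmetric_pair_def symmetric_pair_def)

lemma
  shows linear_J: "linear J"
    and J_h: "z \<in> h \<Longrightarrow> J z = 0"
    and J_m: "x \<in> m_of br h \<Longrightarrow> J x \<in> m_of br h"
    and J_J: "x \<in> m_of br h \<Longrightarrow> J (J x) = - x"
    and killing_J_J: "x \<in> m_of br h \<Longrightarrow> y \<in> m_of br h \<Longrightarrow> killing br (J x) (J y) = killing br x y"
    and J_bracket_h: "z \<in> h \<Longrightarrow> x \<in> m_of br h \<Longrightarrow> J (br z x) = br z (J x)"
  using hermitian_pair by (simp_all add: hermitian_symmetric_pair_def)

lemma killing_m_h: "x \<in> m_of br h \<Longrightarrow> z \<in> h \<Longrightarrow> killing br x z = 0"
  by (simp add: m_of_def)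

lemma killing_h_m: "z \<in> h \<Longrightarrow> x \<in> m_of br h \<Longrightarrow> killing br z x = 0"
  using killing_m_h killing_sym[OF lie_algebra_br] by metis

lemma subspace_m: "subspace (m_of br h)"
  unfolding subspace_def m_of_def
  by (simp add: bilinear_lzero[OF bilinear_B] bilinear_ladd[OF bilinear_B] bilinear_lmul[OF bilinear_B])

lemma h_inter_m: "x \<in> h \<Longrightarrow> x \<in> m_of br h \<Longrightarrow> x = 0"
  using killing_negative killing_m_h by fastforce

lemma pos_def_on_neg_killing: "pos_def_on (\<lambda>x y. - killing br x y) W"
proof -
  have "bilinear (\<lambda>x y. - killing br x y)"
    using bilinear_B unfolding bilinear_def linear_iff by simp
  then show ?thesis
    unfolding pos_def_on_def using killing_sym[OF lie_algebra_br] killing_negative by force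
qed

lemma proj_m_eqI:
  assumes "x \<in> m_of br h" "v - x \<in> h"
  shows "proj_m br h v = x"
  unfolding proj_m_def
proof (rule the_equality)
  fix y assume y: "y \<in> m_of br h \<and> v - y \<in> h"
  have "x - y \<in> h" using subspace_diff[OF subspace_h y[THEN conjunct2] assms(2)] by simp
  moreover have "x - y \<in> m_of br h" using subspace_diff[OF subspace_m assms(1) y[THEN conjunct1]] .
  ultimately show "y = x" using h_inter_m by fastforce
qed (use assms in auto)

definition proj_h :: "'g \<Rightarrow> 'g" where
  "proj_h v = v - proj_m br h v"

lemma proj_h_add_proj_m [simp]: "proj_h v + proj_m br h v = v"
  by (simp add: proj_h_def)

text \<open>\<open>proj_m\<close> is defined by \<open>THE\<close>; it is the genuine projection along \<open>h\<close> because the positive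
  definite form \<open>-B\<close> admits an orthogonal projection onto \<open>h\<close>.\<close>
lemma
  shows proj_m_in_m: "proj_m br h v \<in> m_of br h"
    and proj_h_in_h: "proj_h v \<in> h"
    and linear_proj_m: "linear (proj_m br h)"
proof -
  obtain P where P: "linear P" "\<And>v. P v \<in> h" "\<And>v w. w \<in> h \<Longrightarrow> - killing br (v - P v) w = 0"
    using pos_def_on_orthogonal_projection[OF pos_def_on_neg_killing subspace_h] by blast
  have eq: "proj_m br h v = v - P v" for v
    by (rule proj_m_eqI) (use P in \<open>auto simp: m_of_def\<close>)
  show "proj_m br h v \<in> m_of br h" "proj_h v \<in> h"
    using P by (auto simp: eq proj_h_def m_of_def)
  have "linear (\<lambda>v. v - P v)"
    using P(1) by (simp add: linear_compose_sub linear_id[unfolded id_def])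
  then show "linear (proj_m br h)" by (simp add: eq[abs_def])
qed

lemma linear_proj_h: "linear proj_h"
  unfolding proj_h_def[abs_def]
  by (rule linear_compose_sub[OF linear_id[unfolded id_def] linear_proj_m])

lemma proj_of_h_plus_m:
  assumes "z \<in> h" "x \<in> m_of br h"
  shows "proj_m br h (z + x) = x" and "proj_h (z + x) = z"
proof -
  show "proj_m br h (z + x) = x" by (rule proj_m_eqI) (use assms in simp_all)
  then show "proj_h (z + x) = z" by (simp add: proj_h_def)
qed

lemma proj_m_h: "z \<in> h \<Longrightarrow> proj_m br h z = 0"
  using proj_of_h_plus_m[of z 0] subspace_0[OF subspace_m] by simp

lemma proj_m_m: "x \<in> m_of br h \<Longrightarrow> proj_m br h x = x"
  using proj_of_h_plus_m[of 0 x] subspace_0[OF subspace_h] by simp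

lemma proj_h_h: "z \<in> h \<Longrightarrow> proj_h z = z"
  using proj_m_h by (simp add: proj_h_def)

lemma
  assumes "z \<in> h"
  shows proj_m_bracket_h: "proj_m br h (br z v) = br z (proj_m br h v)"
    and proj_h_bracket_h: "proj_h (br z v) = br z (proj_h v)"
proof -
  have "br z v = br z (proj_h v) + br z (proj_m br h v)"
    using bilinear_radd[OF bilinear_br] by (metis proj_h_add_proj_m)
  then show "proj_m br h (br z v) = br z (proj_m br h v)" "proj_h (br z v) = br z (proj_h v)"
    using proj_of_h_plus_m bracket_h_h[OF assms proj_h_in_h] bracket_h_m[OF assms proj_m_in_m]
    by metis+
qed

lemma killing_h_proj_h: "z \<in> h \<Longrightarrow> killing br z v = killing br z (proj_h v)"
  using bilinear_radd[OF bilinear_B, of z "proj_h v" "proj_m br h v"] killing_h_m[OF _ proj_m_in_m]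
  by simp

lemma killing_proj_split:
  "killing br u w = killing br (proj_h u) (proj_h w) + killing br (proj_m br h u) (proj_m br h w)"
proof -
  have "killing br u w = killing br (proj_h u + proj_m br h u) (proj_h w + proj_m br h w)"
    by simp
  also have "\<dots> = killing br (proj_h u) (proj_h w) + killing br (proj_h u) (proj_m br h w)
      + killing br (proj_m br h u) (proj_h w) + killing br (proj_m br h u) (proj_m br h w)"
    by (simp only: bilinear_ladd[OF bilinear_B] bilinear_radd[OF bilinear_B] add.assoc)
  finally show ?thesis
    by (simp add: killing_h_m[OF proj_h_in_h proj_m_in_m] killing_m_h[OF proj_m_in_m proj_h_in_h])
qed

lemma bracket_J_J:
  assumes x: "x \<in> m_of br h" and y: "y \<in> m_of br h"
  shows "br (J x) (J y) = br x y"
proof -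
  let ?d = "br (J x) (J y) - br x y"
  have "?d \<in> h"
    using bracket_m_m[OF J_m[OF x] J_m[OF y]] bracket_m_m[OF x y] by (simp add: subspace_diff subspace_h)
  moreover have "killing br ?d z = 0" if z: "z \<in> h" for z
  proof -
    have "killing br (br (J x) (J y)) z = killing br (J x) (br (J y) z)"
      by (rule killing_invariant[OF lie_algebra_br])
    also have "br (J y) z = - J (br z y)"
      using J_bracket_h[OF z y] lie_antisym[OF lie_algebra_br, of "J y" z] by simp
    also have "killing br (J x) (- J (br z y)) = - killing br x (br z y)"
      using killing_J_J[OF x bracket_h_m[OF z y]] by (simp add: bilinear_rneg[OF bilinear_B])
    also have "br z y = - br y z" by (rule lie_antisym[OF lie_algebra_br])
    also have "- killing br x (- br y z) = killing br (br x y) z"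
      by (simp add: bilinear_rneg[OF bilinear_B] killing_invariant[OF lie_algebra_br])
    finally show ?thesis by (simp add: bilinear_lsub[OF bilinear_B])
  qed
  then have "?d \<in> m_of br h" by (simp add: m_of_def)
  ultimately have "?d = 0" by (rule h_inter_m)
  then show ?thesis by simp
qed

definition proj_Hs :: "real \<times> 'g \<Rightarrow> real \<times> 'g" where
  "proj_Hs u = (fst u, proj_h (snd u))"

lemma proj_Hs_in_Hs: "u \<in> Vs s \<Longrightarrow> proj_Hs u \<in> Hs h s"
  by (simp add: proj_Hs_def Hs_def Vs_def proj_h_in_h)

lemma proj_Hs_Hs: "u \<in> Hs h s \<Longrightarrow> proj_Hs u = u"
  by (simp add: proj_Hs_def Hs_def proj_h_h)

lemma linear_proj_Hs: "linear proj_Hs"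
  using linear_add[OF linear_proj_h] linear_scale[OF linear_proj_h]
  by (simp add: proj_Hs_def linear_iff)

lemma proj_Hs_add_proj_m: "u = proj_Hs u + (0, proj_m br h (snd u))"
  by (simp add: proj_Hs_def prod_eq_iff)

lemma subspace_Hs: "subspace (Hs h s)"
  using subspace_h by (auto simp: subspace_def Hs_def Vs_def)

lemma dim_Hs:
  assumes "s \<in> {0, 1}"
  shows "dim (Hs h s) = s + dim h"
proof (cases "s = 0")
  case True
  then have "Hs h s = {0} \<times> h" by (auto simp: Hs_def Vs_def)
  with True show ?thesis using dim_Times[OF subspace_single_0 subspace_h] by simp
next
  case False
  with assms have "s = 1" by simp
  moreover from this have "Hs h s = UNIV \<times> h" by (auto simp: Hs_def Vs_def)
  ultimately show ?thesis using dim_Times[OF subspace_UNIV[where 'a=real] subspace_h] by simp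
qed

lemma nbr_in_Vs: "nbr br h u w \<in> Vs s"
  by (simp add: nbr_def Vs_def)

lemma bilinear_nbr: "bilinear (nbr br h)"
  using linear_add[OF linear_proj_m] linear_scale[OF linear_proj_m]
  by (simp add: bilinear_def linear_iff nbr_def bilinear_ladd[OF bilinear_br]
      bilinear_radd[OF bilinear_br] bilinear_lmul[OF bilinear_br] bilinear_rmul[OF bilinear_br])

lemma
  shows nbr_nbr_left: "nbr br h (nbr br h a b) w = 0"
    and nbr_nbr_right: "nbr br h w (nbr br h a b) = 0"
  using proj_m_h[OF bracket_m_m[OF proj_m_in_m proj_m_in_m]]
  by (simp_all add: nbr_def zero_prod_def bilinear_lzero[OF bilinear_br] bilinear_rzero[OF bilinear_br])

lemma bilinear_nip: "bilinear (nip br)"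
  by (simp add: bilinear_def linear_iff nip_def bilinear_ladd[OF bilinear_B]
      bilinear_radd[OF bilinear_B] bilinear_lmul[OF bilinear_B] bilinear_rmul[OF bilinear_B]
      algebra_simps)

lemma nip_sym: "nip br u w = nip br w u"
  using killing_sym[OF lie_algebra_br] by (simp add: nip_def mult.commute)

lemma pos_def_on_nip: "pos_def_on (nip br) W"
proof -
  have "nip br x x > 0" if "x \<noteq> 0" for x
  proof (cases "snd x = 0")
    case True
    with that have "fst x \<noteq> 0" by (simp add: prod_eq_iff)
    then have "0 < fst x * fst x" by (simp flip: power2_eq_square)
    with True show ?thesis by (simp add: nip_def bilinear_lzero[OF bilinear_B])
  next
    case False
    have "fst x * fst x \<ge> 0" by simp
    with killing_negative[OF False] show ?thesis unfolding nip_def by linarith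
  qed
  then show ?thesis using bilinear_nip nip_sym by (simp add: pos_def_on_def)
qed

lemma nip_split:
  "nip br u w = nip br (proj_Hs u) (proj_Hs w) - killing br (proj_m br h (snd u)) (proj_m br h (snd w))"
  using killing_proj_split[of "snd u" "snd w"] by (simp add: nip_def proj_Hs_def)

lemma nip_nbr_cyclic:
  "nip br (nbr br h a b) (nbr br h c d) - nip br (nbr br h a c) (nbr br h b d)
     + nip br (nbr br h a d) (nbr br h b c) = 0"
  using killing_bracket_cyclic[OF lie_algebra_br, of "proj_m br h (snd a)" "proj_m br h (snd b)"
      "proj_m br h (snd c)" "proj_m br h (snd d)"]
  by (simp add: nip_def nbr_def)

lemma adapted_cs_apply:
  assumes "adapted_cs br h J s Jc"
  shows "Jc u = Jc (proj_Hs u) + (0, J (proj_m br h (snd u)))"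
proof -
  have "Jc u = Jc (proj_Hs u) + Jc (0, proj_m br h (snd u))"
    using assms linear_add[of Jc] proj_Hs_add_proj_m by (metis adapted_cs_def)
  then show ?thesis using assms proj_m_in_m by (simp add: adapted_cs_def)
qed

lemma adapted_cs_components:
  assumes Jc: "adapted_cs br h J s Jc" and u: "u \<in> Vs s"
  shows "proj_Hs (Jc u) = Jc (proj_Hs u)"
    and "proj_m br h (snd (Jc u)) = J (proj_m br h (snd u))"
    and "Jc u \<in> Vs s"
proof -
  have "Jc (proj_Hs u) \<in> Hs h s"
    using Jc proj_Hs_in_Hs[OF u] by (simp add: adapted_cs_def)
  then have a: "fst (Jc (proj_Hs u)) = 0 \<or> s \<noteq> 0" "snd (Jc (proj_Hs u)) \<in> h"
    by (auto simp: Hs_def Vs_def)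
  have x: "J (proj_m br h (snd u)) \<in> m_of br h" by (rule J_m[OF proj_m_in_m])
  show "proj_Hs (Jc u) = Jc (proj_Hs u)"
    using proj_of_h_plus_m(2)[OF a(2) x] by (subst adapted_cs_apply[OF Jc]) (simp add: proj_Hs_def)
  show "proj_m br h (snd (Jc u)) = J (proj_m br h (snd u))"
    using proj_of_h_plus_m(1)[OF a(2) x] by (subst adapted_cs_apply[OF Jc]) simp
  show "Jc u \<in> Vs s"
    using a(1) by (subst adapted_cs_apply[OF Jc]) (auto simp: Vs_def)
qed

lemma adapted_cs_involutive:
  assumes Jc: "adapted_cs br h J s Jc" and u: "u \<in> Vs s"
  shows "Jc (Jc u) = - u"
proof -
  have "Jc (Jc u) = Jc (Jc (proj_Hs u)) + (0, J (J (proj_m br h (snd u))))"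
    using adapted_cs_apply[OF Jc, of "Jc u"] adapted_cs_components[OF Jc u] by simp
  also have "\<dots> = - proj_Hs u - (0, proj_m br h (snd u))"
    using Jc proj_Hs_in_Hs[OF u] J_J[OF proj_m_in_m] by (simp add: adapted_cs_def)
  also have "\<dots> = - u"
    using proj_Hs_add_proj_m[of u] by (metis minus_add_distrib diff_conv_add_uminus)
  finally show ?thesis .
qed

lemma adapted_cs_nbr:
  assumes "adapted_cs br h J s Jc" "u \<in> Vs s" "w \<in> Vs s"
  shows "nbr br h (Jc u) (Jc w) = nbr br h u w"
  using adapted_cs_components(2)[OF assms(1,2)] adapted_cs_components(2)[OF assms(1,3)]
  by (simp add: nbr_def bracket_J_J[OF proj_m_in_m proj_m_in_m])

lemma adapted_cs_nip:
  assumes Jc: "adapted_cs br h J s Jc" and u: "u \<in> Vs s" and w: "w \<in> Vs s"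
  shows "nip br (Jc u) (Jc w) = nip br u w"
  using Jc proj_Hs_in_Hs[OF u] proj_Hs_in_Hs[OF w]
  unfolding nip_split[of "Jc u"] nip_split[of u]
  by (simp add: adapted_cs_components[OF Jc u] adapted_cs_components[OF Jc w]
      killing_J_J[OF proj_m_in_m proj_m_in_m] adapted_cs_def)

lemma adapted_cs_abelian:
  assumes Jc: "adapted_cs br h J s Jc"
  shows "abelian_cs (Vs s) (nbr br h) Jc"
  using Jc bilinear_nbr adapted_cs_components(3)[OF Jc] adapted_cs_involutive[OF Jc]
    adapted_cs_nbr[OF Jc]
  by (intro abelian_csI) (simp_all add: adapted_cs_def)

lemma adapted_cs_pluriclosed:
  assumes Jc: "adapted_cs br h J s Jc"
  shows "pluriclosed (Vs s) (nbr br h) (nip br) Jc"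
  by (rule pluriclosed_two_step_nilpotentI[OF bilinear_nip nip_sym nbr_in_Vs adapted_cs_nbr[OF Jc]
        nbr_nbr_left nbr_nbr_right nip_nbr_cyclic])

lemma adapted_cs_exists:
  assumes "s \<in> {0, 1}" and "even (s + dim h)"
  shows "\<exists>Jc. adapted_cs br h J s Jc"
proof -
  obtain L where L: "linear L" "\<And>u. L u \<in> Hs h s" "\<And>u. u \<in> Hs h s \<Longrightarrow> L (L u) = - u"
    "\<And>u w. u \<in> Hs h s \<Longrightarrow> w \<in> Hs h s \<Longrightarrow> nip br (L u) (L w) = nip br u w"
    using pos_def_on_orthogonal_complex_structure[OF pos_def_on_nip subspace_Hs]
      dim_Hs[OF assms(1)] assms(2) by metis
  define Jc where "Jc u = L (proj_Hs u) + (0, J (snd u))" for u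
  have "linear Jc"
    unfolding Jc_def[abs_def]
    using linear_compose[OF linear_proj_Hs L(1)] linear_J
    by (intro linear_compose_add) (simp_all add: o_def linear_iff)
  moreover have "Jc (0, x) = (0, J x)" if "x \<in> m_of br h" for x
    using that linear_0[OF L(1)] by (simp add: Jc_def proj_Hs_def proj_h_def proj_m_m zero_prod_def)
  moreover have "Jc u = L u" if "u \<in> Hs h s" for u
  proof -
    have "snd u \<in> h" using that by (simp add: Hs_def)
    then show ?thesis by (simp add: Jc_def proj_Hs_Hs[OF that] J_h zero_prod_def[symmetric])
  qed
  ultimately have "adapted_cs br h J s Jc"
    using L by (simp add: adapted_cs_def)
  then show ?thesis by blast
qed

definition ad_n :: "'g \<Rightarrow> real \<times> 'g \<Rightarrow> real \<times> 'g" where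
  "ad_n z u = (0, br z (snd u))"

lemma ad_n_skew_derivation:
  assumes z: "z \<in> h"
  shows "skew_derivation (Vs s) (nbr br h) (nip br) (ad_n z)"
  unfolding skew_derivation_def
proof (intro conjI ballI)
  show "linear (ad_n z)"
    by (simp add: ad_n_def linear_iff bilinear_radd[OF bilinear_br] bilinear_rmul[OF bilinear_br])
  fix u w :: "real \<times> 'g"
  show "ad_n z u \<in> Vs s" by (simp add: ad_n_def Vs_def)
  show "ad_n z (nbr br h u w) = nbr br h (ad_n z u) w + nbr br h u (ad_n z w)"
    using lie_jacobi[OF lie_algebra_br, of z] by (simp add: ad_n_def nbr_def proj_m_bracket_h[OF z])
  show "nip br (ad_n z u) w + nip br u (ad_n z w) = 0"
    using killing_ad_skew[OF lie_algebra_br, of z "snd u" "snd w"] by (simp add: ad_n_def nip_def)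
qed

lemma ad_n_linear_combination: "ad_n (c *\<^sub>R a + b) u = c *\<^sub>R ad_n a u + ad_n b u"
  by (simp add: ad_n_def bilinear_ladd[OF bilinear_br] bilinear_lmul[OF bilinear_br])

lemma ad_n_commutator: "ad_n a (ad_n b u) - ad_n b (ad_n a u) = ad_n (br a b) u"
  using lie_jacobi[OF lie_algebra_br, of a b "snd u"] by (simp add: ad_n_def)

lemma reductive_bracket:
  "ad_n (proj_h (snd X)) Y - ad_n (proj_h (snd Y)) X + nbr br h X Y
     = (0, br (snd X) (snd Y) + br (proj_h (snd X)) (proj_h (snd Y)))"
  using lie_bracket_add_identity[OF lie_algebra_br, of "proj_h (snd X)" "proj_h (snd Y)"
      "proj_m br h (snd Y)" "proj_m br h (snd X)"]
  by (simp add: ad_n_def nbr_def)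

lemma reductive_bracket_skew:
  "nip br (ad_n (proj_h (snd X)) Y - ad_n (proj_h (snd Y)) X + nbr br h X Y) Z
   + nip br Y (ad_n (proj_h (snd X)) Z - ad_n (proj_h (snd Z)) X + nbr br h X Z) = 0"
proof -
  let ?a = "proj_h (snd X)" and ?b = "proj_h (snd Y)" and ?c = "proj_h (snd Z)"
  have ab: "killing br (br ?a ?b) (snd Z) = killing br (br ?a ?b) ?c"
    by (rule killing_h_proj_h[OF bracket_h_h[OF proj_h_in_h proj_h_in_h]])
  have ac: "killing br (snd Y) (br ?a ?c) = killing br ?b (br ?a ?c)"
    using killing_h_proj_h[OF bracket_h_h[OF proj_h_in_h proj_h_in_h]] killing_sym[OF lie_algebra_br] by metis
  show ?thesis
    unfolding reductive_bracket
    using killing_ad_skew[OF lie_algebra_br, of "snd X" "snd Y" "snd Z"] killing_ad_skew[OF lie_algebra_br, of ?a ?b ?c]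
    by (simp add: nip_def bilinear_ladd[OF bilinear_B] bilinear_radd[OF bilinear_B] ab ac)
qed

lemma naturally_reductive_Vs: "naturally_reductive (Vs s) (nbr br h) (nip br)"
  unfolding naturally_reductive_def
proof (rule exI[of _ "ad_n ` h"], rule exI[of _ "\<lambda>X. ad_n (proj_h (snd X))"], intro conjI ballI allI)
  show "skew_derivation (Vs s) (nbr br h) (nip br) D" if "D \<in> ad_n ` h" for D
    using that ad_n_skew_derivation by blast
  show "\<exists>F\<in>ad_n ` h. \<forall>u\<in>Vs s. F u = 0"
    using subspace_0[OF subspace_h] by (intro bexI[of _ "ad_n 0"]) (auto simp: ad_n_def zero_prod_def bilinear_lzero[OF bilinear_br])
  fix X Y Z u :: "real \<times> 'g" and c :: real
  show "ad_n (proj_h (snd X)) \<in> ad_n ` h" using proj_h_in_h by blast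
  show "ad_n (proj_h (snd (c *\<^sub>R X + Y))) u = c *\<^sub>R ad_n (proj_h (snd X)) u + ad_n (proj_h (snd Y)) u"
    using linear_add[OF linear_proj_h] linear_scale[OF linear_proj_h] by (simp add: ad_n_linear_combination)
  show "nip br (ad_n (proj_h (snd X)) Y - ad_n (proj_h (snd Y)) X + nbr br h X Y) Z
    + nip br Y (ad_n (proj_h (snd X)) Z - ad_n (proj_h (snd Z)) X + nbr br h X Z) = 0"
    by (rule reductive_bracket_skew)
  fix D E assume D: "D \<in> ad_n ` h" and E: "E \<in> ad_n ` h"
  then obtain a b where ab: "a \<in> h" "b \<in> h" "D = ad_n a" "E = ad_n b" by blast
  show "\<exists>F\<in>ad_n ` h. \<forall>u\<in>Vs s. F u = c *\<^sub>R D u + E u"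
    using ab subspace_add[OF subspace_h] subspace_scale[OF subspace_h]
    by (intro bexI[of _ "ad_n (c *\<^sub>R a + b)"]) (simp_all add: ad_n_linear_combination)
  show "\<exists>F\<in>ad_n ` h. \<forall>u\<in>Vs s. F u = D (E u) - E (D u)"
    using ab bracket_h_h by (intro bexI[of _ "ad_n (br a b)"]) (simp_all add: ad_n_commutator)
  show "D (ad_n (proj_h (snd X)) u) - ad_n (proj_h (snd X)) (D u) = ad_n (proj_h (snd (D X))) u"
    using ab by (simp add: ad_n_commutator) (simp add: ad_n_def proj_h_bracket_h)
qed

end

theorem mainTheorem18:
  fixes br :: "'g::euclidean_space \<Rightarrow> 'g \<Rightarrow> 'g"
    and h :: "'g set" and J :: "'g \<Rightarrow> 'g" and s :: nat
  assumes "compact_semisimple br"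
    and "hermitian_symmetric_pair br h J"
    and "irreducible_pair br h"
    and "s \<in> {0, 1}"
    and "dim h mod 2 = s"
  shows "(\<exists>Jc. adapted_cs br h J s Jc) \<and>
         (\<forall>Jc. adapted_cs br h J s Jc \<longrightarrow>
             abelian_cs (Vs s) (nbr br h) Jc \<and>
             hermitian_metric (Vs s) (nip br) Jc \<and>
             pluriclosed (Vs s) (nbr br h) (nip br) Jc) \<and>
         naturally_reductive (Vs s) (nbr br h) (nip br)"
proof -
  interpret compact_hermitian_symmetric_pair br h J
    using assms(1,2) by unfold_locales
  have "even (s + dim h)" using assms(4,5) by auto
  then show ?thesis
    using adapted_cs_exists[OF assms(4)] adapted_cs_abelian adapted_cs_nip adapted_cs_pluriclosed
      naturally_reductive_Vs
    by (auto simp: hermitian_metric_def)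
qed

end
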